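(* Let $I$ be a finite set of positive integers. Then there are real numbers $c_k$, $k\in I\cup\{0\}$, such that $$d(I;z)=c_0+\sum_{k\in I}c_k\, z^{\underline{k}},$$ and $\frac{1}{k!}\le |c_k|\le 1$ for every $k\in I\cup\{0\}$.
   Context: $z^{\underline{k}}=z(z-1)\cdots(z-k+1)$ is the falling factorial ($z^{\underline 0}=1$). $d(I;z)$ is the descent polynomial: the unique polynomial whose value at each integer $n>\max(I\cup\{0\})$ is the number of permutations $\pi\in\mathfrak S_n$ with $\{j\mid\pi_j>\pi_{j+1}\}=I$. *)

theory Defs
  imports "HOL-Computational_Algebra.Polynomial" "HOL-Combinatorics.Permutations"
begin

definition descent_set :: "nat \<Rightarrow> (nat \<Rightarrow> nat) \<Rightarrow> nat set" where
  "descent_set n \<sigma> = {j \<in> {1..<n}. \<sigma> j > \<sigma> (Suc j)}"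

definition descent_count :: "nat set \<Rightarrow> nat \<Rightarrow> nat" where
  "descent_count I n = card {\<sigma>. \<sigma> permutes {1..n} \<and> descent_set n \<sigma> = I}"

definition descent_poly :: "nat set \<Rightarrow> real poly" where
  "descent_poly I = (THE p. \<forall>n::nat. n > Max (I \<union> {0}) \<longrightarrow>
       poly p (real n) = real (descent_count I n))"

definition falling_poly :: "nat \<Rightarrow> real poly" where
  "falling_poly k = (\<Prod>i<k. [:- real i, 1:])"

end

theory Submission
  imports Defs "HOL-Combinatorics.Multiset_Permutations" "HOL-Library.Infinite_Set"
begin

text \<open>
  Let \<open>\<beta>(J; A)\<close> (\<open>descent_count_on J A\<close>) count the arrangements of a finite set
  \<open>A\<close> of naturals with descent set \<open>J\<close>; it depends only on \<open>|A|\<close>, and \<open>d(I; n) = \<beta>(I; {1..n})\<close>. Let \<open>m = max I\<close> and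
  \<open>J = I - {m}\<close>. An arrangement whose descents other than \<open>m\<close> form \<open>J\<close> is an arrangement
  of some \<open>m\<close>-subset with descent set \<open>J\<close>, followed by the remaining entries in increasing
  order; hence \<open>\<beta>(I; n) + \<beta>(J; n) = C(n, m) \<beta>(J; m)\<close>, i.e.
  \<open>d(I; z) = \<beta>(J; m)/m! \<cdot> falling_poly m - d(J; z)\<close>. By induction on \<open>I\<close>, the new
  coefficient lies in \<open>[1/m!, 1]\<close> because \<open>1 \<le> \<beta>(J; m) \<le> m!\<close>, and the others are those of
  \<open>d(J; z)\<close> up to sign.
\<close>

(* Positions are 1-based, as in descent_set. *)
definition list_descents :: "nat list \<Rightarrow> nat set" where
  "list_descents xs = {j \<in> {1..<length xs}. xs ! (j - 1) > xs ! j}"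

definition descent_count_on :: "nat set \<Rightarrow> nat set \<Rightarrow> nat" where
  "descent_count_on J A = card {xs \<in> permutations_of_set A. list_descents xs = J}"

lemma list_descents_take: "list_descents (take m xs) = list_descents xs \<inter> {..<m}"
  unfolding list_descents_def by auto

lemma sorted_drop_if_list_descents_atMost:
  assumes "list_descents xs \<subseteq> {..m}"
  shows "sorted (drop m xs)"
  unfolding sorted_iff_nth_Suc
proof (intro allI impI)
  fix i assume i: "Suc i < length (drop m xs)"
  have "Suc (m + i) \<notin> list_descents xs" using assms by auto
  then show "drop m xs ! i \<le> drop m xs ! Suc i" using i by (auto simp: list_descents_def)
qed

lemma sorted_iff_list_descents_empty: "sorted xs \<longleftrightarrow> list_descents xs = {}"
proof
  assume "sorted xs"
  then show "list_descents xs = {}"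
    by (auto simp: list_descents_def not_less intro: sorted_nth_mono)
qed (use sorted_drop_if_list_descents_atMost[of xs 0] in simp)

lemma list_descents_append_sorted:
  assumes "length ys = m" and "sorted zs"
  shows "list_descents (ys @ zs) - {m} = list_descents ys"
proof -
  have "j \<notin> list_descents (ys @ zs)" if "j > m" for j
  proof
    assume "j \<in> list_descents (ys @ zs)"
    moreover have "zs ! (j - 1 - m) \<le> zs ! (j - m)" if "j < m + length zs"
      using that \<open>j > m\<close> by (intro sorted_nth_mono[OF assms(2)]) auto
    moreover have "\<not> j - 1 < m" using \<open>j > m\<close> by simp
    ultimately show False
      using assms(1) \<open>j > m\<close> by (auto simp: list_descents_def nth_append)
  qed
  moreover have "list_descents (ys @ zs) \<inter> {..<m} = list_descents ys"
    using list_descents_take[of m "ys @ zs"] assms(1) by simp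
  ultimately show ?thesis
    by (auto simp: not_less_iff_gr_or_eq) (metis IntI lessThan_iff linorder_neqE_nat)
qed

lemma list_descents_snoc:
  "list_descents (ys @ [a]) =
     list_descents ys \<union> (if ys \<noteq> [] \<and> last ys > a then {length ys} else {})"
  by (cases ys rule: rev_cases)
     (auto simp: list_descents_def nth_append last_conv_nth less_Suc_eq)

lemma list_descents_map_strict_mono:
  assumes "strict_mono_on (set xs) h"
  shows "list_descents (map h xs) = list_descents xs"
  unfolding list_descents_def
  using strict_mono_on_less[OF assms] by auto

lemma descent_count_on_image:
  assumes "strict_mono_on A h"
  shows "descent_count_on J (h ` A) = descent_count_on J A"
proof -
  let ?P = "{xs \<in> permutations_of_set A. list_descents xs = J}"
  have inj: "inj_on (map h) ?P"
    using strict_mono_on_imp_inj_on[OF assms]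
    by (intro inj_on_mapI) (auto simp: permutations_of_set_def)
  have "{ys \<in> permutations_of_set (h ` A). list_descents ys = J} = map h ` ?P"
  proof -
    have "list_descents (map h xs) = list_descents xs" if "xs \<in> permutations_of_set A" for xs
      using that assms by (intro list_descents_map_strict_mono) (auto simp: permutations_of_set_def)
    then show ?thesis
      using permutations_of_set_image_inj[OF strict_mono_on_imp_inj_on[OF assms]] by auto
  qed
  then show ?thesis
    unfolding descent_count_on_def using card_image[OF inj] by simp
qed

lemma descent_count_on_cong_card:
  assumes "finite A" and "finite B" and "card A = card B"
  shows "descent_count_on J A = descent_count_on J B"
proof -
  have "descent_count_on J S = descent_count_on J {..<card S}" if "finite S" for S :: "nat set"
  proof -
    have "enumerate S ` {..<card S} = S"
      using finite_bij_enumerate[OF that] by (simp add: bij_betw_def)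
    moreover have "strict_mono_on {..<card S} (enumerate S)"
      using that by (auto intro: strict_mono_onI finite_enumerate_mono)
    ultimately show ?thesis by (metis descent_count_on_image)
  qed
  then show ?thesis using assms by metis
qed

lemma descent_count_on_empty:
  assumes "finite A"
  shows "descent_count_on {} A = 1"
proof -
  have "{xs \<in> permutations_of_set A. list_descents xs = {}} = {sorted_list_of_set A}"
    using assms
    by (auto simp: permutations_of_set_def sorted_iff_list_descents_empty[symmetric]
          intro: sorted_distinct_set_unique)
  then show ?thesis by (simp add: descent_count_on_def)
qed

lemma descent_count_on_le_fact:
  assumes "finite A"
  shows "descent_count_on J A \<le> fact (card A)"
proof -
  have "descent_count_on J A \<le> card (permutations_of_set A)"
    unfolding descent_count_on_def by (rule card_mono) auto
  then show ?thesis using assms by simp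
qed

lemma ex_permutation_of_set_list_descents:
  "J \<subseteq> {1..<k} \<Longrightarrow> \<exists>xs \<in> permutations_of_set {1..k}. list_descents xs = J"
proof (induction k arbitrary: J)
  case 0
  then show ?case by (auto simp: list_descents_def)
next
  case (Suc k)
  have "J - {k} \<subseteq> {1..<k}" using Suc.prems by auto
  then obtain xs where xs: "xs \<in> permutations_of_set {1..k}" "list_descents xs = J - {k}"
    using Suc.IH by blast
  then have set_xs: "set xs = {1..k}" and "distinct xs"
    by (auto simp: permutations_of_set_def)
  then have len_xs: "length xs = k" using distinct_card by fastforce
  show ?case
  proof (cases "k \<in> J")
    case True
    define ys where "ys = map Suc xs @ [1]"
    have "k \<ge> 1" using True Suc.prems by auto
    then have "xs \<noteq> []" using len_xs by auto
    then have "last xs \<in> {1..k}" using set_xs last_in_set[of xs] by blast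
    moreover have "list_descents (map Suc xs) = list_descents xs"
      by (rule list_descents_map_strict_mono) (simp add: strict_mono_onI)
    ultimately have "list_descents ys = insert k (J - {k})"
      using xs(2) len_xs \<open>xs \<noteq> []\<close> by (simp add: ys_def list_descents_snoc last_map)
    then have "list_descents ys = J" using True by (simp add: insert_absorb)
    moreover have "ys \<in> permutations_of_set {1..Suc k}"
      using set_xs \<open>distinct xs\<close>
      by (auto simp: ys_def permutations_of_set_def distinct_map image_Suc_atLeastAtMost)
    ultimately show ?thesis by blast
  next
    case False
    define ys where "ys = xs @ [Suc k]"
    have "(if xs \<noteq> [] \<and> last xs > Suc k then {length xs} else {}) = {}"
      using set_xs last_in_set[of xs] by fastforce
    then have "list_descents ys = J"
      using xs(2) False by (simp add: ys_def list_descents_snoc)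
    moreover have "ys \<in> permutations_of_set {1..Suc k}"
      using set_xs \<open>distinct xs\<close> by (auto simp: ys_def permutations_of_set_def)
    ultimately show ?thesis by blast
  qed
qed

lemma descent_count_on_pos:
  "J \<subseteq> {1..<k} \<Longrightarrow> descent_count_on J {1..k} > 0"
  using ex_permutation_of_set_list_descents[of J k]
  by (auto simp: descent_count_on_def card_gt_0_iff)

(* After position m there are no descents, so the tail is the increasing list of the
   remaining entries. *)
lemma bij_betw_take_list_descents:
  assumes "finite A" and "m \<le> card A" and "J \<subseteq> {..<m}"
  shows "bij_betw (take m) {xs \<in> permutations_of_set A. list_descents xs - {m} = J}
           {ys. distinct ys \<and> set ys \<subseteq> A \<and> length ys = m \<and> list_descents ys = J}"
    (is "bij_betw _ ?S ?T")
proof (rule bij_betw_byWitness[where f' = "\<lambda>ys. ys @ sorted_list_of_set (A - set ys)"])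
  show "\<forall>xs \<in> ?S. take m xs @ sorted_list_of_set (A - set (take m xs)) = xs"
  proof
    fix xs assume "xs \<in> ?S"
    then have "distinct xs" "set xs = A" and "list_descents xs \<subseteq> {..m}"
      using assms(3) by (auto simp: permutations_of_set_def)
    then have "sorted (drop m xs)" and "distinct (drop m xs)"
      using sorted_drop_if_list_descents_atMost by auto
    moreover have "set (drop m xs) = A - set (take m xs)"
      using \<open>set xs = A\<close> set_take_disj_set_drop_if_distinct[OF \<open>distinct xs\<close>, of m m]
        set_append[of "take m xs" "drop m xs"]
      by auto
    ultimately have "sorted_list_of_set (A - set (take m xs)) = drop m xs"
      using assms(1) by (intro sorted_distinct_set_unique) auto
    then show "take m xs @ sorted_list_of_set (A - set (take m xs)) = xs" by simp
  qed
  show "\<forall>ys \<in> ?T. take m (ys @ sorted_list_of_set (A - set ys)) = ys" by simp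
  show "take m ` ?S \<subseteq> ?T"
  proof
    fix ys assume "ys \<in> take m ` ?S"
    then obtain xs where xs: "xs \<in> ?S" "ys = take m xs" by blast
    then have "length xs = card A" by (metis (mono_tags) length_finite_permutations_of_set mem_Collect_eq)
    then show "ys \<in> ?T"
      using xs assms(2,3) list_descents_take[of m xs]
      by (auto simp: permutations_of_set_def dest: in_set_takeD)
  qed
  show "(\<lambda>ys. ys @ sorted_list_of_set (A - set ys)) ` ?T \<subseteq> ?S"
  proof (rule image_subsetI)
    fix ys assume ys: "ys \<in> ?T"
    define zs where "zs = ys @ sorted_list_of_set (A - set ys)"
    have "list_descents zs - {m} = J"
      using ys list_descents_append_sorted[of ys m] by (simp add: zs_def)
    moreover have "zs \<in> permutations_of_set A"
      using ys assms(1) by (auto simp: zs_def permutations_of_set_def)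
    ultimately show "zs \<in> ?S" by blast
  qed
qed

lemma card_partial_arrangements_list_descents:
  assumes "finite A"
  shows "card {ys. distinct ys \<and> set ys \<subseteq> A \<and> length ys = m \<and> list_descents ys = J}
           = (card A choose m) * descent_count_on J {1..m}"
proof -
  let ?U = "\<lambda>B. {ys \<in> permutations_of_set B. list_descents ys = J}"
  have "{ys. distinct ys \<and> set ys \<subseteq> A \<and> length ys = m \<and> list_descents ys = J}
          = (\<Union>B \<in> {B. B \<subseteq> A \<and> card B = m}. ?U B)"
    by (auto simp: permutations_of_set_def distinct_card)
  also have "card \<dots> = (\<Sum>B \<in> {B. B \<subseteq> A \<and> card B = m}. card (?U B))"
  proof (rule card_UN_disjoint)
    show "finite {B. B \<subseteq> A \<and> card B = m}" using assms by simp
    show "\<forall>B \<in> {B. B \<subseteq> A \<and> card B = m}. finite (?U B)" by simp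
  qed (auto simp: permutations_of_set_def)
  also have "\<dots> = (\<Sum>B \<in> {B. B \<subseteq> A \<and> card B = m}. descent_count_on J {1..m})"
    unfolding descent_count_on_def[symmetric]
    using assms by (intro sum.cong refl descent_count_on_cong_card) (auto intro: finite_subset)
  also have "\<dots> = (card A choose m) * descent_count_on J {1..m}"
    using n_subsets[OF assms] by simp
  finally show ?thesis .
qed

lemma descent_count_on_insert_max:
  assumes "finite A" and "m \<le> card A" and "J \<subseteq> {..<m}"
  shows "descent_count_on (insert m J) A + descent_count_on J A
           = (card A choose m) * descent_count_on J {1..m}"
proof -
  have "m \<notin> J" using assms(3) by blast
  then have "{xs \<in> permutations_of_set A. list_descents xs - {m} = J}
      = {xs \<in> permutations_of_set A. list_descents xs = insert m J}
        \<union> {xs \<in> permutations_of_set A. list_descents xs = J}"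
    by blast
  then have "card {xs \<in> permutations_of_set A. list_descents xs - {m} = J}
      = descent_count_on (insert m J) A + descent_count_on J A"
    using \<open>m \<notin> J\<close> unfolding descent_count_on_def by (auto intro: card_Un_disjoint)
  then show ?thesis
    using bij_betw_same_card[OF bij_betw_take_list_descents[OF assms]]
      card_partial_arrangements_list_descents[OF assms(1)] by simp
qed

lemma bij_betw_map_permutes:
  assumes "distinct xs"
  shows "bij_betw (\<lambda>\<sigma>. map \<sigma> xs) {\<sigma>. \<sigma> permutes set xs} (permutations_of_set (set xs))"
proof -
  let ?F = "\<lambda>\<sigma>. map \<sigma> xs"
  have inj: "inj_on ?F {\<sigma>. \<sigma> permutes set xs}"
  proof (rule inj_onI)
    fix \<sigma> \<tau> assume "\<sigma> \<in> {\<sigma>. \<sigma> permutes set xs}" "\<tau> \<in> {\<sigma>. \<sigma> permutes set xs}" "?F \<sigma> = ?F \<tau>"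
    then show "\<sigma> = \<tau>" by (metis map_eq_conv mem_Collect_eq permutes_not_in ext)
  qed
  have "?F ` {\<sigma>. \<sigma> permutes set xs} \<subseteq> permutations_of_set (set xs)"
    using assms
    by (auto simp: permutations_of_set_def distinct_map permutes_image permutes_inj_on)
  moreover have "card (?F ` {\<sigma>. \<sigma> permutes set xs}) = card (permutations_of_set (set xs))"
    using card_image[OF inj] by (simp add: card_permutations)
  ultimately show ?thesis
    using inj by (simp add: bij_betw_def card_subset_eq)
qed

lemma descent_set_eq_list_descents: "descent_set n \<sigma> = list_descents (map \<sigma> [1..<Suc n])"
  by (auto simp: descent_set_def list_descents_def simp del: upt_Suc)

lemma card_Collect_bij_betw:
  assumes "bij_betw f A B"
  shows "card {x \<in> A. P (f x)} = card {y \<in> B. P y}"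
proof -
  have "f ` {x \<in> A. P (f x)} = {y \<in> B. P y}"
    using bij_betw_imp_surj_on[OF assms] by auto
  then show ?thesis
    using bij_betw_imp_inj_on[OF assms] by (metis (no_types, lifting) card_image inj_on_subset mem_Collect_eq subsetI)
qed

lemma descent_count_eq_descent_count_on: "descent_count I n = descent_count_on I {1..n}"
proof -
  have "bij_betw (\<lambda>\<sigma>. map \<sigma> [1..<Suc n]) {\<sigma>. \<sigma> permutes {1..n}} (permutations_of_set {1..n})"
    using bij_betw_map_permutes[of "[1..<Suc n]"]
    by (simp add: atLeastLessThanSuc_atLeastAtMost del: upt_Suc)
  from card_Collect_bij_betw[OF this, of "\<lambda>xs. list_descents xs = I"] show ?thesis
    by (simp add: descent_count_def descent_count_on_def descent_set_eq_list_descents del: upt_Suc)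
qed

lemma poly_falling_poly: "poly (falling_poly k) x = fact k * (x gchoose k)"
  by (simp add: falling_poly_def poly_prod gbinomial_mult_fact atLeast0LessThan)

lemma poly_eqI_eventually:
  fixes p q :: "real poly"
  assumes "\<And>n. n > N \<Longrightarrow> poly p (real n) = poly q (real n)"
  shows "p = q"
proof (rule ccontr)
  assume "p \<noteq> q"
  then have "finite {x. poly (p - q) x = 0}" by (intro poly_roots_finite) simp
  moreover have "real ` {N<..} \<subseteq> {x. poly (p - q) x = 0}" using assms by auto
  ultimately have "finite {N<..}"
    by (metis finite_imageD finite_subset inj_on_of_nat)
  then show False using infinite_Ioi by blast
qed

lemma descent_poly_eqI:
  assumes "\<And>n. n > Max (I \<union> {0}) \<Longrightarrow> poly p (real n) = real (descent_count I n)"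
  shows "descent_poly I = p"
  unfolding descent_poly_def
proof (rule the_equality)
  fix q
  assume "\<forall>n. n > Max (I \<union> {0}) \<longrightarrow> poly q (real n) = real (descent_count I n)"
  then show "q = p" using assms by (intro poly_eqI_eventually) auto
qed (use assms in blast)

definition falling_expansion :: "(nat \<Rightarrow> real) \<Rightarrow> nat set \<Rightarrow> real poly" where
  "falling_expansion c I = [:c 0:] + (\<Sum>k\<in>I. smult (c k) (falling_poly k))"

lemma falling_expansion_insert:
  assumes "finite A" and "b \<notin> A" and "b \<noteq> 0"
  shows "falling_expansion (\<lambda>k. if k = b then a else - c k) (insert b A)
           = smult a (falling_poly b) - falling_expansion c A"
proof -
  have "(\<Sum>k\<in>A. smult (if k = b then a else - c k) (falling_poly k))
          = - (\<Sum>k\<in>A. smult (c k) (falling_poly k))"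
    unfolding sum_negf[symmetric] using assms(2) by (intro sum.cong) auto
  then show ?thesis
    using assms by (simp add: falling_expansion_def)
qed

lemma falling_expansion_descent_count_on:
  assumes "finite I" and "0 \<notin> I"
  shows "\<exists>c. (\<forall>n > Max (I \<union> {0}).
                poly (falling_expansion c I) (real n) = real (descent_count_on I {1..n}))
            \<and> (\<forall>k \<in> I \<union> {0}. 1 / fact k \<le> \<bar>c k\<bar> \<and> \<bar>c k\<bar> \<le> 1)"
  using assms
proof (induction I rule: finite_linorder_max_induct)
  case empty
  show ?case by (intro exI[of _ "\<lambda>_. 1"]) (simp add: falling_expansion_def descent_count_on_empty)
next
  case (insert b A)
  have "b \<noteq> 0" "0 \<notin> A" and A_less: "A \<subseteq> {1..<b}"
    using insert.prems insert.hyps(2) by (auto simp: Suc_le_eq) (metis gr0I)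
  then obtain c where c_eval: "\<And>n. n > Max (A \<union> {0}) \<Longrightarrow>
      poly (falling_expansion c A) (real n) = real (descent_count_on A {1..n})"
    and c_bounds: "\<forall>k \<in> A \<union> {0}. 1 / fact k \<le> \<bar>c k\<bar> \<and> \<bar>c k\<bar> \<le> 1"
    using insert.IH by blast
  define \<beta> where "\<beta> = real (descent_count_on A {1..b})"
  define c' where "c' = (\<lambda>k. if k = b then \<beta> / fact b else - c k)"
  have "b \<notin> A" and Max_A: "Max (A \<union> {0}) < b"
    using insert.hyps \<open>b \<noteq> 0\<close> by auto
  have Max_bA: "Max (insert b A \<union> {0}) = b"
    using insert.hyps by (intro Max_eqI) auto
  have eval: "poly (falling_expansion c' (insert b A)) (real n)
                = real (descent_count_on (insert b A) {1..n})" if "n > b" for n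
  proof -
    have "descent_count_on (insert b A) {1..n} + descent_count_on A {1..n}
            = (n choose b) * descent_count_on A {1..b}"
      using descent_count_on_insert_max[of "{1..n}" b A] that insert.hyps(2) by (simp add: subset_eq)
    then have "real (descent_count_on (insert b A) {1..n}) + real (descent_count_on A {1..n})
                 = real (n choose b) * \<beta>"
      unfolding \<beta>_def by (metis of_nat_add of_nat_mult)
    moreover have "poly (falling_expansion c' (insert b A)) (real n)
                     = real (n choose b) * \<beta> - real (descent_count_on A {1..n})"
      using c_eval[of n] Max_A that
      by (simp add: c'_def falling_expansion_insert[OF insert.hyps(1) \<open>b \<notin> A\<close> \<open>b \<noteq> 0\<close>]
          poly_falling_poly binomial_gbinomial)
    ultimately show ?thesis by linarith
  qed
  have "descent_count_on A {1..b} \<le> fact b"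
    using descent_count_on_le_fact[of "{1..b}" A] by simp
  then have "\<beta> \<le> fact b" unfolding \<beta>_def by (metis of_nat_fact of_nat_le_iff)
  moreover have "1 \<le> \<beta>"
    using descent_count_on_pos[OF A_less] unfolding \<beta>_def by simp
  ultimately have "1 / fact b \<le> \<bar>c' b\<bar> \<and> \<bar>c' b\<bar> \<le> 1"
    by (simp add: c'_def divide_right_mono)
  then show ?case
    using eval c_bounds Max_bA by (intro exI[of _ c']) (auto simp: c'_def)
qed

theorem lemma4p12:
  fixes I :: "nat set"
  assumes "finite I" and "0 \<notin> I"
  shows "\<exists>c :: nat \<Rightarrow> real.
           descent_poly I = [:c 0:] + (\<Sum>k\<in>I. smult (c k) (falling_poly k)) \<and>
           (\<forall>k \<in> I \<union> {0}. 1 / fact k \<le> \<bar>c k\<bar> \<and> \<bar>c k\<bar> \<le> 1)"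
proof -
  obtain c where eval: "\<forall>n > Max (I \<union> {0}).
      poly (falling_expansion c I) (real n) = real (descent_count_on I {1..n})"
    and bounds: "\<forall>k \<in> I \<union> {0}. 1 / fact k \<le> \<bar>c k\<bar> \<and> \<bar>c k\<bar> \<le> 1"
    using falling_expansion_descent_count_on[OF assms] by blast
  have "descent_poly I = falling_expansion c I"
    using eval by (intro descent_poly_eqI) (simp add: descent_count_eq_descent_count_on)
  then show ?thesis
    using bounds unfolding falling_expansion_def by blast
qed

end
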